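(* Let $n \ge 3$ be odd and let $T$ be the $n$-vertex tree obtained from the star $K_{1,(n-1)/2}$ by subdividing each edge exactly once (by one new vertex). Then $$\chi_{2K_2}(T) = \left\lceil \sqrt{n - \tfrac34} + \tfrac12 \right\rceil.$$
   Context: All graphs are finite and simple. For a fixed bipartite graph $H$, a proper vertex coloring of a graph $G$ is called an $H$-avoiding coloring if for any two color classes, the subgraph of $G$ induced by their union contains no induced subgraph isomorphic to $H$. $\chi_H(G)$ denotes the minimum number of colors in an $H$-avoiding coloring of $G$. $2K_2$ is the disjoint union of two edges; $K_{1,m}$ is the star with $m$ leaves. *)

theory Defs
  imports Complex_Main
begin

text \<open>Graphs are given by a vertex set V and a symmetric irreflexive edge relation E.\<close>

definition has_induced_copy ::
  "'b set \<Rightarrow> ('b \<Rightarrow> 'b \<Rightarrow> bool) \<Rightarrow> 'a set \<Rightarrow> ('a \<Rightarrow> 'a \<Rightarrow> bool) \<Rightarrow> bool" where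
  "has_induced_copy VH EH S E \<longleftrightarrow>
     (\<exists>f. inj_on f VH \<and> f ` VH \<subseteq> S \<and> (\<forall>u\<in>VH. \<forall>v\<in>VH. EH u v \<longleftrightarrow> E (f u) (f v)))"

definition proper_coloring :: "'a set \<Rightarrow> ('a \<Rightarrow> 'a \<Rightarrow> bool) \<Rightarrow> ('a \<Rightarrow> nat) \<Rightarrow> bool" where
  "proper_coloring V E c \<longleftrightarrow> (\<forall>u\<in>V. \<forall>v\<in>V. E u v \<longrightarrow> c u \<noteq> c v)"

definition H_avoiding_coloring ::
  "'b set \<Rightarrow> ('b \<Rightarrow> 'b \<Rightarrow> bool) \<Rightarrow> 'a set \<Rightarrow> ('a \<Rightarrow> 'a \<Rightarrow> bool) \<Rightarrow> ('a \<Rightarrow> nat) \<Rightarrow> bool" where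
  "H_avoiding_coloring VH EH V E c \<longleftrightarrow> proper_coloring V E c \<and>
     (\<forall>i j. i \<noteq> j \<longrightarrow> \<not> has_induced_copy VH EH {v \<in> V. c v = i \<or> c v = j} E)"

definition chi_H ::
  "'b set \<Rightarrow> ('b \<Rightarrow> 'b \<Rightarrow> bool) \<Rightarrow> 'a set \<Rightarrow> ('a \<Rightarrow> 'a \<Rightarrow> bool) \<Rightarrow> nat" where
  "chi_H VH EH V E = (LEAST k. \<exists>c. c ` V \<subseteq> {..<k} \<and> H_avoiding_coloring VH EH V E c)"

definition twoK2_V :: "nat set" where "twoK2_V = {0,1,2,3}"
definition twoK2_E :: "nat \<Rightarrow> nat \<Rightarrow> bool" where
  "twoK2_E u v \<longleftrightarrow> {u, v} = {0, 1} \<or> {u, v} = {2, 3}"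

text \<open>Star K_{1,k} with each edge subdivided once: center 0, middle vertices 1..k,
  leaves k+1..2k, edges 0--i and i--(i+k) for 1 <= i <= k.\<close>
definition sub_star_V :: "nat \<Rightarrow> nat set" where "sub_star_V k = {..2*k}"
definition sub_star_E :: "nat \<Rightarrow> nat \<Rightarrow> nat \<Rightarrow> bool" where
  "sub_star_E k u v \<longleftrightarrow>
     (u = 0 \<and> 1 \<le> v \<and> v \<le> k) \<or> (v = 0 \<and> 1 \<le> u \<and> u \<le> k) \<or>
     (1 \<le> u \<and> u \<le> k \<and> v = u + k) \<or> (1 \<le> v \<and> v \<le> k \<and> u = v + k)"

end

theory Submission
  imports Defs
begin

(* In a proper colouring of the subdivided star, each spoke (middle vertex i, leaf i + K)
   carries a 2-set of colours, and an induced 2K_2 must consist of two whole spokes, since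
   every edge has a middle endpoint adjacent to the centre. So a colouring avoids 2K_2 in
   every pair of colour classes iff it is proper and distinct spokes carry distinct colour
   pairs; with m colours this is possible iff K <= m choose 2 (colour the centre 0 and
   put the larger colour of the i-th pair on the middle vertex). Solving m (m - 1) / 2 >= K
   with n = 2 K + 1 gives the ceiling formula. *)

lemma twoK2_E_iff:
  "twoK2_E u v \<longleftrightarrow> (u = 0 \<and> v = 1) \<or> (u = 1 \<and> v = 0) \<or> (u = 2 \<and> v = 3) \<or> (u = 3 \<and> v = 2)"
  unfolding twoK2_E_def by (auto simp: doubleton_eq_iff)

lemma has_induced_2K2_iff:
  assumes "symp E" and "irreflp E"
  shows "has_induced_copy twoK2_V twoK2_E S E \<longleftrightarrow>
    (\<exists>p\<in>S. \<exists>q\<in>S. \<exists>r\<in>S. \<exists>s\<in>S. E p q \<and> E r s \<and> \<not> E p r \<and> \<not> E p s \<and> \<not> E q r \<and> \<not> E q s)"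
    (is "_ \<longleftrightarrow> ?matching")
proof
  assume "has_induced_copy twoK2_V twoK2_E S E"
  then obtain f where "f ` twoK2_V \<subseteq> S" and f: "\<forall>u\<in>twoK2_V. \<forall>v\<in>twoK2_V. twoK2_E u v \<longleftrightarrow> E (f u) (f v)"
    unfolding has_induced_copy_def by blast
  moreover have "E (f 0) (f 1)" "E (f 2) (f 3)" "\<not> E (f 0) (f 2)" "\<not> E (f 0) (f 3)"
    "\<not> E (f 1) (f 2)" "\<not> E (f 1) (f 3)"
    using f unfolding twoK2_V_def by (auto simp: twoK2_E_iff)
  ultimately show ?matching unfolding twoK2_V_def by (intro bexI) auto
next
  assume ?matching
  then obtain p q r s where S: "p \<in> S" "q \<in> S" "r \<in> S" "s \<in> S"
    and M: "E p q" "E r s" "\<not> E p r" "\<not> E p s" "\<not> E q r" "\<not> E q s" by blast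
  have sym: "E x y \<Longrightarrow> E y x" for x y using \<open>symp E\<close> by (blast dest: sympD)
  have irr: "\<not> E x x" for x using \<open>irreflp E\<close> by (simp add: irreflpD)
  have M': "E q p" "E s r" "\<not> E r p" "\<not> E s p" "\<not> E r q" "\<not> E s q"
    using M sym by blast+
  have distinct: "distinct [p, q, r, s]"
    using M sym irr by auto
  define f where "f x = (if x = 0 then p else if x = 1 then q else if x = 2 then r else s)" for x :: nat
  have "inj_on f twoK2_V" "f ` twoK2_V \<subseteq> S"
    using distinct S unfolding inj_on_def twoK2_V_def f_def by auto
  moreover have "\<forall>u\<in>twoK2_V. \<forall>v\<in>twoK2_V. twoK2_E u v \<longleftrightarrow> E (f u) (f v)"
    using M M' irr unfolding twoK2_V_def f_def twoK2_E_iff by simp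
  ultimately show "has_induced_copy twoK2_V twoK2_E S E"
    unfolding has_induced_copy_def by blast
qed

lemma doubleton_subset_eq: "{a, b} \<subseteq> {x, y} \<Longrightarrow> a \<noteq> b \<Longrightarrow> {a, b} = {x, y}"
  by auto

lemma card_two_Min_Max:
  fixes B :: "'a::linorder set"
  assumes "card B = 2"
  shows "Min B < Max B" "{Min B, Max B} = B"
proof -
  obtain a b where "B = {a, b}" "a < b"
    using assms unfolding card_2_iff by (metis insert_commute neqE)
  then show "Min B < Max B" "{Min B, Max B} = B" by auto
qed

lemma le_choose_two_iff_sqrt:
  fixes K m :: nat
  assumes "0 < K"
  shows "K \<le> m choose 2 \<longleftrightarrow> sqrt (real (2*K+1) - 3/4) + 1/2 \<le> real m"
proof (cases "m = 0")
  case True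
  have "0 \<le> sqrt (real (2*K+1) - 3/4)" by simp
  then have "\<not> sqrt (real (2*K+1) - 3/4) + 1/2 \<le> real m" using True by linarith
  with True assms show ?thesis by (simp add: choose_two)
next
  case False
  have "K \<le> m choose 2 \<longleftrightarrow> 2*K \<le> m * (m - 1)"
    by (auto simp: choose_two)
  also have "\<dots> \<longleftrightarrow> real (2*K) \<le> real m * (real m - 1)"
  proof -
    have "real (m * (m - 1)) = real m * (real m - 1)"
      using False by (simp add: of_nat_diff)
    then show ?thesis by (metis of_nat_le_iff)
  qed
  also have "\<dots> \<longleftrightarrow> real (2*K) + 1/4 \<le> (real m - 1/2)\<^sup>2"
    by (simp add: power2_eq_square algebra_simps)
  also have "\<dots> \<longleftrightarrow> sqrt (real (2*K) + 1/4) \<le> real m - 1/2"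
    using False by (auto intro: real_le_lsqrt dest: sqrt_le_D)
  finally show ?thesis by (simp add: algebra_simps)
qed

lemma symp_sub_star_E: "symp (sub_star_E K)"
  unfolding symp_def sub_star_E_def by auto

lemma irreflp_sub_star_E: "irreflp (sub_star_E K)"
  unfolding irreflp_def sub_star_E_def by auto

lemma sub_star_E_cases:
  assumes "sub_star_E K u v"
  obtains (center) "u = 0" "v \<in> {1..K}" | (center') "v = 0" "u \<in> {1..K}"
    | (spoke) "u \<in> {1..K}" "v = u + K" | (spoke') "v \<in> {1..K}" "u = v + K"
  using assms unfolding sub_star_E_def by auto

lemma sub_star_E_middle_endpoint:
  assumes "sub_star_E K u v"
  obtains m where "m \<in> {u, v}" "1 \<le> m" "m \<le> K"
  using assms unfolding sub_star_E_def by auto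

lemma sub_star_E_center: "1 \<le> m \<Longrightarrow> m \<le> K \<Longrightarrow> sub_star_E K 0 m \<and> sub_star_E K m 0"
  unfolding sub_star_E_def by auto

lemma sub_star_E_spoke:
  assumes "sub_star_E K u v" "u \<noteq> 0" "v \<noteq> 0"
  obtains i where "i \<in> {1..K}" "{u, v} = {i, i+K}"
proof -
  from assms consider "u \<in> {1..K}" "v = u + K" | "v \<in> {1..K}" "u = v + K"
    unfolding sub_star_E_def by auto
  then show thesis by cases (use that in \<open>auto simp: insert_commute\<close>)
qed

lemma sub_star_induced_matching_iff:
  "(\<exists>p\<in>S. \<exists>q\<in>S. \<exists>r\<in>S. \<exists>s\<in>S. sub_star_E K p q \<and> sub_star_E K r s \<and>
      \<not> sub_star_E K p r \<and> \<not> sub_star_E K p s \<and> \<not> sub_star_E K q r \<and> \<not> sub_star_E K q s)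
   \<longleftrightarrow> (\<exists>i\<in>{1..K}. \<exists>j\<in>{1..K}. i \<noteq> j \<and> {i, i+K, j, j+K} \<subseteq> S)"
  (is "?matching \<longleftrightarrow> ?spokes")
proof
  assume ?matching
  then obtain p q r s where S: "{p, q, r, s} \<subseteq> S" and E: "sub_star_E K p q" "sub_star_E K r s"
    and nonE: "\<not> sub_star_E K p r" "\<not> sub_star_E K p s" "\<not> sub_star_E K q r" "\<not> sub_star_E K q s"
    by blast
  have pq: "0 \<notin> {p, q}"
  proof -
    obtain m where "m \<in> {r, s}" "1 \<le> m" "m \<le> K" using E(2) by (rule sub_star_E_middle_endpoint)
    then show ?thesis using nonE sub_star_E_center[of m K] by blast
  qed
  have rs: "0 \<notin> {r, s}"
  proof -
    obtain m where "m \<in> {p, q}" "1 \<le> m" "m \<le> K" using E(1) by (rule sub_star_E_middle_endpoint)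
    then show ?thesis using nonE sub_star_E_center[of m K] by blast
  qed
  obtain i where i: "i \<in> {1..K}" "{p, q} = {i, i+K}"
    by (rule sub_star_E_spoke[OF E(1)]) (use pq in auto)
  obtain j where j: "j \<in> {1..K}" "{r, s} = {j, j+K}"
    by (rule sub_star_E_spoke[OF E(2)]) (use rs in auto)
  have "i \<noteq> j"
  proof
    assume "i = j"
    then have "p = r \<or> p = s" using i j by (auto simp: doubleton_eq_iff)
    moreover have "sub_star_E K q p" "sub_star_E K s r"
      using E symp_sub_star_E by (blast dest: sympD)+
    ultimately show False using nonE by auto
  qed
  moreover have "{i, i+K} \<union> {j, j+K} \<subseteq> S"
    using S unfolding i(2)[symmetric] j(2)[symmetric] by auto
  ultimately show ?spokes using i(1) j(1) by blast
next
  assume ?spokes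
  then obtain i j where "i \<in> {1..K}" "j \<in> {1..K}" "i \<noteq> j" "{i, i+K, j, j+K} \<subseteq> S" by blast
  then show ?matching
    by (intro bexI[of _ i] bexI[of _ "i+K"] bexI[of _ j] bexI[of _ "j+K"]) (auto simp: sub_star_E_def)
qed

lemma has_induced_2K2_sub_star_iff:
  "has_induced_copy twoK2_V twoK2_E S (sub_star_E K) \<longleftrightarrow>
     (\<exists>i\<in>{1..K}. \<exists>j\<in>{1..K}. i \<noteq> j \<and> {i, i+K, j, j+K} \<subseteq> S)"
  by (simp only: has_induced_2K2_iff[OF symp_sub_star_E irreflp_sub_star_E] sub_star_induced_matching_iff)

lemma proper_coloring_spoke:
  assumes "proper_coloring (sub_star_V K) (sub_star_E K) c" and "i \<in> {1..K}"
  shows "c i \<noteq> c (i+K)"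
proof -
  have "i \<in> sub_star_V K" "i+K \<in> sub_star_V K" "sub_star_E K i (i+K)"
    using assms(2) unfolding sub_star_V_def sub_star_E_def by auto
  then show ?thesis using assms(1) unfolding proper_coloring_def by blast
qed

lemma sub_star_2K2_in_two_colors_iff:
  assumes proper: "proper_coloring (sub_star_V K) (sub_star_E K) c"
  shows "(\<exists>x y. x \<noteq> y \<and> has_induced_copy twoK2_V twoK2_E {v \<in> sub_star_V K. c v = x \<or> c v = y} (sub_star_E K))
    \<longleftrightarrow> \<not> inj_on (\<lambda>i. {c i, c (i+K)}) {1..K}"
proof
  assume "\<exists>x y. x \<noteq> y \<and> has_induced_copy twoK2_V twoK2_E {v \<in> sub_star_V K. c v = x \<or> c v = y} (sub_star_E K)"
  then obtain x y i j where ij: "i \<in> {1..K}" "j \<in> {1..K}" "i \<noteq> j"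
    and in_class: "{i, i+K, j, j+K} \<subseteq> {v \<in> sub_star_V K. c v = x \<or> c v = y}"
    unfolding has_induced_2K2_sub_star_iff by blast
  from in_class have "{c i, c (i+K)} \<subseteq> {x, y}" "{c j, c (j+K)} \<subseteq> {x, y}"
    by auto
  then have "{c i, c (i+K)} = {x, y}" "{c j, c (j+K)} = {x, y}"
    using proper_coloring_spoke[OF proper ij(1)] proper_coloring_spoke[OF proper ij(2)]
    by (auto intro: doubleton_subset_eq)
  then have "{c i, c (i+K)} = {c j, c (j+K)}"
    by simp
  with ij show "\<not> inj_on (\<lambda>i. {c i, c (i+K)}) {1..K}"
    unfolding inj_on_def by blast
next
  assume "\<not> inj_on (\<lambda>i. {c i, c (i+K)}) {1..K}"
  then obtain i j where ij: "i \<in> {1..K}" "j \<in> {1..K}" "i \<noteq> j" "{c i, c (i+K)} = {c j, c (j+K)}"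
    unfolding inj_on_def by blast
  then have "c j \<in> {c i, c (i+K)}" "c (j+K) \<in> {c i, c (i+K)}"
    by auto
  moreover have "{i, i+K, j, j+K} \<subseteq> sub_star_V K"
    using ij(1,2) unfolding sub_star_V_def by auto
  ultimately have "{i, i+K, j, j+K} \<subseteq> {v \<in> sub_star_V K. c v = c i \<or> c v = c (i+K)}"
    by auto
  then have "has_induced_copy twoK2_V twoK2_E {v \<in> sub_star_V K. c v = c i \<or> c v = c (i+K)} (sub_star_E K)"
    unfolding has_induced_2K2_sub_star_iff using ij(1-3) by blast
  then show "\<exists>x y. x \<noteq> y \<and> has_induced_copy twoK2_V twoK2_E {v \<in> sub_star_V K. c v = x \<or> c v = y} (sub_star_E K)"
    using proper_coloring_spoke[OF proper ij(1)] by blast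
qed

lemma sub_star_avoiding_iff:
  "H_avoiding_coloring twoK2_V twoK2_E (sub_star_V K) (sub_star_E K) c \<longleftrightarrow>
     proper_coloring (sub_star_V K) (sub_star_E K) c \<and> inj_on (\<lambda>i. {c i, c (i+K)}) {1..K}"
  unfolding H_avoiding_coloring_def using sub_star_2K2_in_two_colors_iff by blast

lemma sub_star_avoiding_colors_bound:
  assumes avoiding: "H_avoiding_coloring twoK2_V twoK2_E (sub_star_V K) (sub_star_E K) c"
    and colors: "c ` sub_star_V K \<subseteq> {..<m}"
  shows "K \<le> m choose 2"
proof -
  have proper: "proper_coloring (sub_star_V K) (sub_star_E K) c"
    and inj: "inj_on (\<lambda>i. {c i, c (i+K)}) {1..K}"
    using avoiding unfolding sub_star_avoiding_iff by auto
  have "(\<lambda>i. {c i, c (i+K)}) ` {1..K} \<subseteq> {B. B \<subseteq> {..<m} \<and> card B = 2}"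
  proof clarify
    fix i assume i: "i \<in> {1..K}"
    then have "{i, i+K} \<subseteq> sub_star_V K" unfolding sub_star_V_def by auto
    then show "{c i, c (i+K)} \<subseteq> {..<m} \<and> card {c i, c (i+K)} = 2"
      using colors proper_coloring_spoke[OF proper i] by auto
  qed
  then have "card {1..K} \<le> card {B. B \<subseteq> {..<m} \<and> card B = 2}"
    using inj by (intro card_inj_on_le) (auto simp: finite_subset[of _ "Pow {..<m}"])
  then show ?thesis by (simp add: n_subsets)
qed

text \<open>The spoke i gets the colour pair h i, with the larger colour on the middle vertex i,
  so that the centre can take colour 0.\<close>
definition pair_coloring :: "nat \<Rightarrow> (nat \<Rightarrow> nat set) \<Rightarrow> nat \<Rightarrow> nat" where
  "pair_coloring K h v = (if v = 0 then 0 else if v \<le> K then Max (h v) else Min (h (v - K)))"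

lemma pair_coloring_spoke:
  assumes "i \<in> {1..K}"
  shows "pair_coloring K h i = Max (h i)" "pair_coloring K h (i+K) = Min (h i)"
  using assms unfolding pair_coloring_def by auto

lemma pair_coloring_spoke_pair:
  assumes "i \<in> {1..K}" and "card (h i) = 2"
  shows "{pair_coloring K h i, pair_coloring K h (i+K)} = h i"
  using pair_coloring_spoke[OF assms(1)] card_two_Min_Max[OF assms(2)] by (simp add: insert_commute)

lemma pair_coloring_proper:
  assumes "\<And>i. i \<in> {1..K} \<Longrightarrow> card (h i) = 2"
  shows "proper_coloring (sub_star_V K) (sub_star_E K) (pair_coloring K h)"
  unfolding proper_coloring_def
proof (intro ballI impI)
  have Min_less_Max: "Min (h i) < Max (h i)" if "i \<in> {1..K}" for i
    using card_two_Min_Max(1)[OF assms[OF that]] .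
  fix u v assume "sub_star_E K u v"
  then show "pair_coloring K h u \<noteq> pair_coloring K h v"
  proof (cases rule: sub_star_E_cases)
    case center
    then show ?thesis using pair_coloring_spoke(1) Min_less_Max[of v] by (simp add: pair_coloring_def)
  next
    case center'
    then show ?thesis using pair_coloring_spoke(1) Min_less_Max[of u] by (simp add: pair_coloring_def)
  next
    case spoke
    then show ?thesis using pair_coloring_spoke Min_less_Max[of u] by simp
  next
    case spoke'
    then show ?thesis using pair_coloring_spoke Min_less_Max[of v] by simp
  qed
qed

lemma pair_coloring_colors:
  assumes "0 < K" and h: "\<And>i. i \<in> {1..K} \<Longrightarrow> h i \<subseteq> {..<m} \<and> card (h i) = 2"
  shows "pair_coloring K h ` sub_star_V K \<subseteq> {..<m}"
proof -
  have Max_less: "Min (h i) < Max (h i)" "Max (h i) < m" if "i \<in> {1..K}" for i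
    using h[OF that] card_two_Min_Max[of "h i"] by auto
  show ?thesis
  proof clarify
    fix v assume "v \<in> sub_star_V K"
    then consider "v = 0" | "v \<in> {1..K}" | "v - K \<in> {1..K}" "v = (v - K) + K"
      unfolding sub_star_V_def by force
    then show "pair_coloring K h v < m"
    proof cases
      case 1
      then show ?thesis using Max_less[of 1] \<open>0 < K\<close> by (simp add: pair_coloring_def)
    next
      case 2
      then show ?thesis using pair_coloring_spoke(1) Max_less(2) by simp
    next
      case 3
      then show ?thesis using pair_coloring_spoke(2)[of "v - K"] Max_less[of "v - K"] by (metis less_trans)
    qed
  qed
qed

lemma sub_star_avoiding_coloring_exists:
  assumes "0 < K" and "K \<le> m choose 2"
  shows "\<exists>c. c ` sub_star_V K \<subseteq> {..<m} \<and> H_avoiding_coloring twoK2_V twoK2_E (sub_star_V K) (sub_star_E K) c"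
proof -
  have "finite {B. B \<subseteq> {..<m} \<and> card B = 2}"
    by (rule finite_subset[of _ "Pow {..<m}"]) auto
  moreover have "card {1..K} \<le> card {B. B \<subseteq> {..<m} \<and> card B = 2}"
    using assms(2) by (simp add: n_subsets)
  ultimately obtain h where "h ` {1..K} \<subseteq> {B. B \<subseteq> {..<m} \<and> card B = 2}" and inj: "inj_on h {1..K}"
    using card_le_inj[OF finite_atLeastAtMost] by blast
  then have h_pair: "h i \<subseteq> {..<m} \<and> card (h i) = 2" if "i \<in> {1..K}" for i
    using that by blast
  have "pair_coloring K h ` sub_star_V K \<subseteq> {..<m}"
    using assms(1) h_pair by (rule pair_coloring_colors)
  moreover have "proper_coloring (sub_star_V K) (sub_star_E K) (pair_coloring K h)"
    using h_pair by (intro pair_coloring_proper) blast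
  moreover have "inj_on (\<lambda>i. {pair_coloring K h i, pair_coloring K h (i+K)}) {1..K}"
    using inj by (rule inj_on_cong[THEN iffD2, rotated]) (simp add: pair_coloring_spoke_pair h_pair)
  ultimately show ?thesis
    unfolding sub_star_avoiding_iff by blast
qed

lemma chi_H_2K2_sub_star:
  assumes "0 < K"
  shows "chi_H twoK2_V twoK2_E (sub_star_V K) (sub_star_E K) = (LEAST m. K \<le> m choose 2)"
proof -
  have "(\<exists>c. c ` sub_star_V K \<subseteq> {..<m} \<and> H_avoiding_coloring twoK2_V twoK2_E (sub_star_V K) (sub_star_E K) c)
      \<longleftrightarrow> K \<le> m choose 2" for m
    using sub_star_avoiding_colors_bound sub_star_avoiding_coloring_exists[OF assms] by blast
  then show ?thesis
    unfolding chi_H_def by simp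
qed

theorem corollary4:
  fixes n :: nat
  assumes "n \<ge> 3" and "odd n"
  shows "int (chi_H twoK2_V twoK2_E (sub_star_V ((n - 1) div 2)) (sub_star_E ((n - 1) div 2)))
           = \<lceil>sqrt (real n - 3/4) + 1/2\<rceil>"
proof -
  define K where "K = (n - 1) div 2"
  have n: "n = 2*K + 1" and "0 < K"
    using assms unfolding K_def by (auto elim: oddE)
  have "chi_H twoK2_V twoK2_E (sub_star_V K) (sub_star_E K) = (LEAST m. K \<le> m choose 2)"
    using \<open>0 < K\<close> by (rule chi_H_2K2_sub_star)
  also have "\<dots> = nat \<lceil>sqrt (real n - 3/4) + 1/2\<rceil>"
    unfolding n by (rule Least_equality) (simp_all add: le_choose_two_iff_sqrt[OF \<open>0 < K\<close>])
  finally have chi: "chi_H twoK2_V twoK2_E (sub_star_V K) (sub_star_E K) = nat \<lceil>sqrt (real n - 3/4) + 1/2\<rceil>" .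
  have "0 \<le> sqrt (real n - 3/4)"
    using assms(1) by (intro real_sqrt_ge_zero) simp
  then have "0 \<le> \<lceil>sqrt (real n - 3/4) + 1/2\<rceil>"
    unfolding zero_le_ceiling by linarith
  with chi show ?thesis
    unfolding K_def by simp
qed

end
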